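(* Let $(\mathcal X,\mathcal F,t)$ be an instance of SET-COVER and let $\mathbb G$ be the graph constructed from it as described in the context. If $E'$ is a good 3-completion set of $\mathbb G$, then $\{S_j\in\mathcal F : (S_j,P)\in E'\}$ is a set cover of $\mathcal X$ of size $|E'|$.
   Context: SET-COVER instance $(\mathcal X,\mathcal F,t)$: a finite set $\mathcal X$ of items, a family $\mathcal F$ of nonempty subsets of $\mathcal X$ such that every item lies in some set of $\mathcal F$, and an integer $t$; a set cover is a subfamily $\mathcal S\subseteq\mathcal F$ with $\bigcup_{S\in\mathcal S}S=\mathcal X$. The graph $\mathbb G$ is built as follows: (1) for each set $S_j\in\mathcal F$ add a vertex $S_j$ (set vertex); (2) for each item $x_i\in\mathcal X$ add an item subgraph $I_i$ consisting of $2|\mathcal X|$ new isolated vertices; (3) for each $x_i$ and $S_j$ with $x_i\in S_j$, join $S_j$ to every vertex of $I_i$; (4) for each edge $(S_j,v)$ added in (3), add a new (auxiliary) vertex $w$ adjacent to $S_j$ and $v$; (5) add a common vertex $P$ adjacent to every vertex of every $I_i$. A connected graph has a $(3,1)$-cover if each edge lies in a triangle; a 3-completion set of $\mathbb G$ is a set $E'$ of non-edges of $\mathbb G$ such that $\mathbb G\cup E'$ has a $(3,1)$-cover; it is good if $E'\subseteq\{(S_j,P): S_j\in\mathcal F\}$. *)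

theory Defs
  imports Main
begin

text \<open>Simple undirected graphs: a vertex set and a set of edges, each edge a
  two-element set of vertices.\<close>

definition set_cover_instance :: "'a set \<Rightarrow> 'a set set \<Rightarrow> bool" where
  "set_cover_instance X F \<longleftrightarrow> finite X \<and> (\<forall>S\<in>F. S \<noteq> {} \<and> S \<subseteq> X) \<and> (\<forall>x\<in>X. \<exists>S\<in>F. x \<in> S)"

definition is_set_cover :: "'a set \<Rightarrow> 'a set set \<Rightarrow> 'a set set \<Rightarrow> bool" where
  "is_set_cover X F C \<longleftrightarrow> C \<subseteq> F \<and> \<Union>C = X"

text \<open>Vertices of the constructed graph: set vertices, item vertices
  (item x, copy k), auxiliary vertices (one per edge (S, ItemV x k)), and P.\<close>
datatype 'a vert = SetV "'a set" | ItemV 'a nat | AuxV "'a set" 'a nat | PV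

definition G_verts :: "'a set \<Rightarrow> 'a set set \<Rightarrow> 'a vert set" where
  "G_verts X F =
     SetV ` F
   \<union> {ItemV x k | x k. x \<in> X \<and> k < 2 * card X}
   \<union> {AuxV S x k | S x k. S \<in> F \<and> x \<in> S \<and> k < 2 * card X}
   \<union> {PV}"

definition G_edges :: "'a set \<Rightarrow> 'a set set \<Rightarrow> 'a vert set set" where
  "G_edges X F =
     {{SetV S, ItemV x k} | S x k. S \<in> F \<and> x \<in> S \<and> k < 2 * card X}
   \<union> {{AuxV S x k, SetV S} | S x k. S \<in> F \<and> x \<in> S \<and> k < 2 * card X}
   \<union> {{AuxV S x k, ItemV x k} | S x k. S \<in> F \<and> x \<in> S \<and> k < 2 * card X}
   \<union> {{PV, ItemV x k} | x k. x \<in> X \<and> k < 2 * card X}"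

definition has_31_cover :: "'v set \<Rightarrow> 'v set set \<Rightarrow> bool" where
  "has_31_cover V E \<longleftrightarrow>
     (\<forall>e\<in>E. \<exists>a b c. e = {a, b} \<and> c \<in> V \<and> {a, c} \<in> E \<and> {b, c} \<in> E)"

definition non_edges :: "'v set \<Rightarrow> 'v set set \<Rightarrow> 'v set set" where
  "non_edges V E = {{u, v} | u v. u \<in> V \<and> v \<in> V \<and> u \<noteq> v \<and> {u, v} \<notin> E}"

definition completion_set_3 :: "'v set \<Rightarrow> 'v set set \<Rightarrow> 'v set set \<Rightarrow> bool" where
  "completion_set_3 V E E' \<longleftrightarrow> E' \<subseteq> non_edges V E \<and> has_31_cover V (E \<union> E')"

definition good_completion :: "'a set \<Rightarrow> 'a set set \<Rightarrow> 'a vert set set \<Rightarrow> bool" where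
  "good_completion X F E' \<longleftrightarrow>
     completion_set_3 (G_verts X F) (G_edges X F) E' \<and> E' \<subseteq> {{SetV S, PV} | S. S \<in> F}"

end

theory Submission
  imports Defs
begin

text \<open>Every edge between \<open>P\<close> and an item vertex of \<open>x\<close> must lie in a triangle. In the
  original graph \<open>P\<close> is adjacent only to item vertices, and no two item vertices are
  adjacent, so the third vertex of the triangle is a set vertex \<open>S\<close> joined to \<open>P\<close> by a
  completion edge and adjacent to the item vertex, i.e. \<open>x \<in> S\<close>. Since completion edges
  and the sets they join to \<open>P\<close> correspond bijectively, the cover has size \<open>|E'|\<close>.\<close>

lemma has_31_cover_common_neighbour:
  assumes "has_31_cover V E" and "{a, b} \<in> E"
  shows "\<exists>c\<in>V. {a, c} \<in> E \<and> {b, c} \<in> E"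
proof -
  have "\<exists>a' b' c. {a, b} = {a', b'} \<and> c \<in> V \<and> {a', c} \<in> E \<and> {b', c} \<in> E"
    using assms(1)[unfolded has_31_cover_def] assms(2) by (rule bspec)
  then obtain a' b' c where "a = a' \<and> b = b' \<or> a = b' \<and> b = a'"
      and "c \<in> V" "{a', c} \<in> E" "{b', c} \<in> E"
    by (auto simp: doubleton_eq_iff)
  then show ?thesis by blast
qed

lemma G_edges_PV_neighbour: "{PV, c} \<in> G_edges X F \<Longrightarrow> \<exists>y k. c = ItemV y k"
  unfolding G_edges_def by (auto simp: doubleton_eq_iff)

lemma G_edges_ItemV_neighbour:
  "{ItemV x k, c} \<in> G_edges X F \<Longrightarrow> c = PV \<or> (\<exists>S. x \<in> S \<and> (c = SetV S \<or> c = AuxV S x k))"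
  unfolding G_edges_def by (auto simp: doubleton_eq_iff)

lemma PV_ItemV_in_G_edges:
  assumes "finite X" and "x \<in> X"
  shows "{PV, ItemV x 0} \<in> G_edges X F"
proof -
  have "0 < 2 * card X"
    using assms by (auto simp: card_gt_0_iff)
  then show ?thesis
    using assms(2) unfolding G_edges_def by blast
qed

lemma triangle_on_PV_ItemV_edge:
  assumes E': "E' \<subseteq> {{SetV S, PV} | S. S \<in> F}"
    and PV_c: "{PV, c} \<in> G_edges X F \<union> E'"
    and item_c: "{ItemV x k, c} \<in> G_edges X F \<union> E'"
  shows "\<exists>S. c = SetV S \<and> {SetV S, PV} \<in> E' \<and> x \<in> S"
proof -
  have PV_c_E': "{PV, c} \<in> E'" if "\<nexists>y l. c = ItemV y l"
    using PV_c that by (auto dest: G_edges_PV_neighbour)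
  have "{ItemV x k, c} \<notin> E'"
    using E' by (auto simp: doubleton_eq_iff)
  with item_c have "{ItemV x k, c} \<in> G_edges X F"
    by blast
  then consider "c = PV" | S where "x \<in> S" "c = SetV S" | S where "c = AuxV S x k"
    by (metis G_edges_ItemV_neighbour)
  then show ?thesis
  proof cases
    case 1
    then show ?thesis
      using PV_c_E' E' by (auto simp: doubleton_eq_iff)
  next
    case (2 S)
    then have "{PV, SetV S} \<in> E'"
      using PV_c_E' by blast
    then show ?thesis
      using 2 by (auto simp: insert_commute)
  next
    case (3 S)
    then show ?thesis
      using PV_c_E' E' by (auto simp: doubleton_eq_iff)
  qed
qed

lemma card_sets_joined_to_PV:
  assumes "E' \<subseteq> {{SetV S, PV} | S. S \<in> F}"
  shows "card {S \<in> F. {SetV S, PV} \<in> E'} = card E'"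
proof -
  have "inj_on (\<lambda>S. {SetV S, PV}) {S \<in> F. {SetV S, PV} \<in> E'}"
    by (auto simp: inj_on_def doubleton_eq_iff)
  moreover have "(\<lambda>S. {SetV S, PV}) ` {S \<in> F. {SetV S, PV} \<in> E'} = E'"
    using assms by auto
  ultimately show ?thesis
    using card_image by fastforce
qed

theorem lemma1:
  fixes X :: "'a set" and F :: "'a set set" and E' :: "'a vert set set"
  assumes "set_cover_instance X F"
    and "good_completion X F E'"
  shows "is_set_cover X F {S \<in> F. {SetV S, PV} \<in> E'}
         \<and> card {S \<in> F. {SetV S, PV} \<in> E'} = card E'"
proof -
  have E': "E' \<subseteq> {{SetV S, PV} | S. S \<in> F}"
    and cover: "has_31_cover (G_verts X F) (G_edges X F \<union> E')"
    using assms(2) unfolding good_completion_def completion_set_3_def by auto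
  have "x \<in> \<Union>{S \<in> F. {SetV S, PV} \<in> E'}" if "x \<in> X" for x
  proof -
    have "{PV, ItemV x 0} \<in> G_edges X F \<union> E'"
      using assms(1) that by (simp add: set_cover_instance_def PV_ItemV_in_G_edges)
    then obtain c where "{PV, c} \<in> G_edges X F \<union> E'" "{ItemV x 0, c} \<in> G_edges X F \<union> E'"
      using has_31_cover_common_neighbour[OF cover] by blast
    then obtain S where "{SetV S, PV} \<in> E'" "x \<in> S"
      using triangle_on_PV_ItemV_edge[OF E'] by blast
    moreover have "S \<in> F"
      using \<open>{SetV S, PV} \<in> E'\<close> E' by (auto simp: doubleton_eq_iff)
    ultimately show ?thesis by blast
  qed
  moreover have "\<Union>{S \<in> F. {SetV S, PV} \<in> E'} \<subseteq> X"
    using assms(1) unfolding set_cover_instance_def by blast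
  ultimately show ?thesis
    unfolding is_set_cover_def using card_sets_joined_to_PV[OF E'] by blast
qed

end
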